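(* Let $(\mathcal{S},\mathcal{A},\tau,\mu_0,R,\gamma)$ be an MDP and let $\preceq^\xi_{\star,R}$ be the relation on possible initial trajectories given by $\xi_1\preceq^\xi_{\star,R}\xi_2\iff G_R(\xi_1)\le G_R(\xi_2)$. If $R'$ is obtained from $R$ by a finite sequence of transformations each of which is a $k$-initial potential shaping (for some $k\in\mathbb{R}$), a positive linear scaling, or a mask of unreachable transitions, then $\preceq^\xi_{\star,R'}=\preceq^\xi_{\star,R}$.
   Context: An MDP has finite $\mathcal{S},\mathcal{A}$, $\tau:\mathcal{S}\times\mathcal{A}\to\Delta(\mathcal{S})$, $\mu_0\in\Delta(\mathcal{S})$, $R:\mathcal{S}\times\mathcal{A}\times\mathcal{S}\to\mathbb{R}$, $\gamma\in(0,1)$. A transition $(s,a,s')$ is possible if $\tau(s'\mid s,a)>0$. A trajectory $\xi=(s_0,a_0,s_1,\dots)$ is possible if all its transitions are possible and initial if $\mu_0(s_0)>0$; $G(\xi)=\sum_{t\ge0}\gamma^tR(s_t,a_t,s_{t+1})$. A transition is reachable if it occurs in some possible initial trajectory; mask of unreachable transitions: $R'(x)=R(x)$ for all reachable $x$. Positive linear scaling: $R'=cR$, $c>0$. A state is initial if $\mu_0(s)>0$, terminal (for $R$) if $\tau(s\mid s,a)=1$ and $R(s,a,s)=0$ for all $a$. $k$-initial potential shaping: $R'(s,a,s')=R(s,a,s')+\gamma\Phi(s')-\Phi(s)$ with $\Phi:\mathcal{S}\to\mathbb{R}$, $\Phi=0$ on terminal states, $\Phi=k$ on initial states. *)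

theory Defs
  imports "HOL-Probability.Probability_Mass_Function"
begin

text \<open>A trajectory is a pair of a state sequence and an
  action sequence: (s_0, a_0, s_1, a_1, ...).\<close>

type_synonym ('s, 'a) traj = "(nat \<Rightarrow> 's) \<times> (nat \<Rightarrow> 'a)"
type_synonym ('s, 'a) reward = "'s \<Rightarrow> 'a \<Rightarrow> 's \<Rightarrow> real"

definition possible_transition :: "('s \<Rightarrow> 'a \<Rightarrow> 's pmf) \<Rightarrow> 's \<Rightarrow> 'a \<Rightarrow> 's \<Rightarrow> bool" where
  "possible_transition \<tau> s a s' \<longleftrightarrow> pmf (\<tau> s a) s' > 0"

definition possible_traj :: "('s \<Rightarrow> 'a \<Rightarrow> 's pmf) \<Rightarrow> ('s, 'a) traj \<Rightarrow> bool" where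
  "possible_traj \<tau> \<xi> \<longleftrightarrow>
     (\<forall>t. possible_transition \<tau> (fst \<xi> t) (snd \<xi> t) (fst \<xi> (Suc t)))"

definition initial_traj :: "'s pmf \<Rightarrow> ('s, 'a) traj \<Rightarrow> bool" where
  "initial_traj \<mu>0 \<xi> \<longleftrightarrow> pmf \<mu>0 (fst \<xi> 0) > 0"

definition traj_return :: "real \<Rightarrow> ('s, 'a) reward \<Rightarrow> ('s, 'a) traj \<Rightarrow> real" where
  "traj_return \<gamma> R \<xi> = (\<Sum>t. \<gamma> ^ t * R (fst \<xi> t) (snd \<xi> t) (fst \<xi> (Suc t)))"

definition reachable_transition ::
  "('s \<Rightarrow> 'a \<Rightarrow> 's pmf) \<Rightarrow> 's pmf \<Rightarrow> 's \<Rightarrow> 'a \<Rightarrow> 's \<Rightarrow> bool" where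
  "reachable_transition \<tau> \<mu>0 s a s' \<longleftrightarrow>
     (\<exists>\<xi> t. possible_traj \<tau> \<xi> \<and> initial_traj \<mu>0 \<xi> \<and>
            fst \<xi> t = s \<and> snd \<xi> t = a \<and> fst \<xi> (Suc t) = s')"

definition initial_state :: "'s pmf \<Rightarrow> 's \<Rightarrow> bool" where
  "initial_state \<mu>0 s \<longleftrightarrow> pmf \<mu>0 s > 0"

definition terminal_state :: "('s \<Rightarrow> 'a \<Rightarrow> 's pmf) \<Rightarrow> ('s, 'a) reward \<Rightarrow> 's \<Rightarrow> bool" where
  "terminal_state \<tau> R s \<longleftrightarrow> (\<forall>a. pmf (\<tau> s a) s = 1 \<and> R s a s = 0)"

definition mask_unreachable ::
  "('s \<Rightarrow> 'a \<Rightarrow> 's pmf) \<Rightarrow> 's pmf \<Rightarrow> ('s, 'a) reward \<Rightarrow> ('s, 'a) reward \<Rightarrow> bool" where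
  "mask_unreachable \<tau> \<mu>0 R R' \<longleftrightarrow>
     (\<forall>s a s'. reachable_transition \<tau> \<mu>0 s a s' \<longrightarrow> R' s a s' = R s a s')"

definition positive_scaling :: "('s, 'a) reward \<Rightarrow> ('s, 'a) reward \<Rightarrow> bool" where
  "positive_scaling R R' \<longleftrightarrow> (\<exists>c::real. c > 0 \<and> R' = (\<lambda>s a s'. c * R s a s'))"

definition k_initial_shaping ::
  "('s \<Rightarrow> 'a \<Rightarrow> 's pmf) \<Rightarrow> 's pmf \<Rightarrow> real \<Rightarrow> real \<Rightarrow> ('s, 'a) reward \<Rightarrow> ('s, 'a) reward \<Rightarrow> bool" where
  "k_initial_shaping \<tau> \<mu>0 \<gamma> k R R' \<longleftrightarrow>
     (\<exists>\<Phi> :: 's \<Rightarrow> real.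
        (\<forall>s. terminal_state \<tau> R s \<longrightarrow> \<Phi> s = 0) \<and>
        (\<forall>s. initial_state \<mu>0 s \<longrightarrow> \<Phi> s = k) \<and>
        R' = (\<lambda>s a s'. R s a s' + \<gamma> * \<Phi> s' - \<Phi> s))"

definition transform_step ::
  "('s \<Rightarrow> 'a \<Rightarrow> 's pmf) \<Rightarrow> 's pmf \<Rightarrow> real \<Rightarrow> ('s, 'a) reward \<Rightarrow> ('s, 'a) reward \<Rightarrow> bool" where
  "transform_step \<tau> \<mu>0 \<gamma> R R' \<longleftrightarrow>
     (\<exists>k. k_initial_shaping \<tau> \<mu>0 \<gamma> k R R') \<or> positive_scaling R R' \<or>
     mask_unreachable \<tau> \<mu>0 R R'"

end

theory Submission
  imports Defs
begin

text \<open>Each admissible transformation changes the return of every possible initial trajectory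
  by a positive affine map: scaling multiplies it by \<open>c > 0\<close>; masking leaves it unchanged,
  since such trajectories only use reachable transitions; and \<open>k\<close>-initial potential shaping
  adds the telescoping series \<open>\<Sum>t. \<gamma>^(t+1) \<Phi>(s_(t+1)) - \<gamma>^t \<Phi>(s_t) = -\<Phi>(s_0) = -k\<close>.
  Positive affine maps compose and preserve the order, so the return ordering is invariant.\<close>

lemma finite_range_abs_bounded:
  fixes f :: "'x::finite \<Rightarrow> real"
  obtains M where "\<And>x. \<bar>f x\<bar> \<le> M"
proof
  show "\<bar>f x\<bar> \<le> Max (range (\<lambda>x. \<bar>f x\<bar>))" for x by simp
qed

lemma discounted_bounded_tendsto_zero:
  fixes f :: "nat \<Rightarrow> real"
  assumes "\<bar>\<gamma>\<bar> < 1" and "\<And>t. \<bar>f t\<bar> \<le> M"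
  shows "(\<lambda>t. \<gamma> ^ t * f t) \<longlonglongrightarrow> 0"
proof (rule Lim_null_comparison)
  show "\<forall>\<^sub>F t in sequentially. norm (\<gamma> ^ t * f t) \<le> \<bar>\<gamma>\<bar> ^ t * M"
    using assms(2) by (intro always_eventually allI) (simp add: abs_mult power_abs mult_left_mono)
  show "(\<lambda>t. \<bar>\<gamma>\<bar> ^ t * M) \<longlonglongrightarrow> 0"
    using assms(1) by (intro tendsto_mult_left_zero LIMSEQ_power_zero) auto
qed

lemma summable_discounted_bounded:
  fixes f :: "nat \<Rightarrow> real"
  assumes "\<bar>\<gamma>\<bar> < 1" and "\<And>t. \<bar>f t\<bar> \<le> M"
  shows "summable (\<lambda>t. \<gamma> ^ t * f t)"
proof (rule summable_comparison_test)
  show "\<exists>N. \<forall>t\<ge>N. norm (\<gamma> ^ t * f t) \<le> \<bar>\<gamma>\<bar> ^ t * M"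
    using assms(2) by (auto simp: abs_mult power_abs intro!: mult_left_mono)
  show "summable (\<lambda>t. \<bar>\<gamma>\<bar> ^ t * M)"
    using assms(1) by (intro summable_mult2 summable_geometric) auto
qed

lemma summable_traj_rewards:
  fixes R :: "('s::finite, 'a::finite) reward"
  assumes "\<bar>\<gamma>\<bar> < 1"
  shows "summable (\<lambda>t. \<gamma> ^ t * R (fst \<xi> t) (snd \<xi> t) (fst \<xi> (Suc t)))"
proof -
  obtain M where "\<And>x. \<bar>(\<lambda>(s, a, s'). R s a s') x\<bar> \<le> M"
    using finite_range_abs_bounded by blast
  then have "\<bar>R s a s'\<bar> \<le> M" for s a s'
    by (metis case_prod_conv)
  then show ?thesis
    using assms by (intro summable_discounted_bounded)
qed

lemma traj_return_scaled:
  fixes R :: "('s::finite, 'a::finite) reward"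
  assumes "\<bar>\<gamma>\<bar> < 1"
  shows "traj_return \<gamma> (\<lambda>s a s'. c * R s a s') \<xi> = c * traj_return \<gamma> R \<xi>"
  using suminf_mult[OF summable_traj_rewards[OF assms, where R = R and \<xi> = \<xi>], of c]
  unfolding traj_return_def by (simp add: algebra_simps)

lemma traj_return_potential_shaped:
  fixes R :: "('s::finite, 'a::finite) reward" and \<Phi> :: "'s \<Rightarrow> real"
  assumes "\<bar>\<gamma>\<bar> < 1"
  shows "traj_return \<gamma> (\<lambda>s a s'. R s a s' + \<gamma> * \<Phi> s' - \<Phi> s) \<xi>
           = traj_return \<gamma> R \<xi> - \<Phi> (fst \<xi> 0)"
proof -
  let ?r = "\<lambda>t. \<gamma> ^ t * R (fst \<xi> t) (snd \<xi> t) (fst \<xi> (Suc t))"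
  let ?p = "\<lambda>t. \<gamma> ^ t * \<Phi> (fst \<xi> t)"
  obtain M where "\<And>s. \<bar>\<Phi> s\<bar> \<le> M"
    using finite_range_abs_bounded by blast
  then have "?p \<longlonglongrightarrow> 0"
    using assms by (intro discounted_bounded_tendsto_zero)
  then have "(\<lambda>t. ?p (Suc t) - ?p t) sums (0 - ?p 0)"
    by (rule telescope_sums)
  moreover have "?r sums traj_return \<gamma> R \<xi>"
    unfolding traj_return_def using summable_traj_rewards[OF assms] by (rule summable_sums)
  ultimately have "(\<lambda>t. ?r t + (?p (Suc t) - ?p t)) sums (traj_return \<gamma> R \<xi> - \<Phi> (fst \<xi> 0))"
    using sums_add by fastforce
  then show ?thesis
    unfolding traj_return_def by (simp add: sums_iff algebra_simps)
qed

lemma traj_return_cong: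
  assumes "\<And>t. R' (fst \<xi> t) (snd \<xi> t) (fst \<xi> (Suc t)) = R (fst \<xi> t) (snd \<xi> t) (fst \<xi> (Suc t))"
  shows "traj_return \<gamma> R' \<xi> = traj_return \<gamma> R \<xi>"
  unfolding traj_return_def using assms by simp

lemma traj_return_mask_unreachable:
  assumes "mask_unreachable \<tau> \<mu>0 R R'" and "possible_traj \<tau> \<xi>" and "initial_traj \<mu>0 \<xi>"
  shows "traj_return \<gamma> R' \<xi> = traj_return \<gamma> R \<xi>"
  using assms unfolding mask_unreachable_def reachable_transition_def
  by (intro traj_return_cong) blast

definition returns_pos_affine ::
  "('s \<Rightarrow> 'a \<Rightarrow> 's pmf) \<Rightarrow> 's pmf \<Rightarrow> real \<Rightarrow> ('s, 'a) reward \<Rightarrow> ('s, 'a) reward \<Rightarrow> bool" where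
  "returns_pos_affine \<tau> \<mu>0 \<gamma> R R' \<longleftrightarrow>
     (\<exists>c > 0. \<exists>b. \<forall>\<xi>. possible_traj \<tau> \<xi> \<and> initial_traj \<mu>0 \<xi> \<longrightarrow>
        traj_return \<gamma> R' \<xi> = c * traj_return \<gamma> R \<xi> + b)"

lemma returns_pos_affineI_shift:
  assumes "\<And>\<xi>. possible_traj \<tau> \<xi> \<Longrightarrow> initial_traj \<mu>0 \<xi> \<Longrightarrow>
             traj_return \<gamma> R' \<xi> = traj_return \<gamma> R \<xi> + b"
  shows "returns_pos_affine \<tau> \<mu>0 \<gamma> R R'"
  unfolding returns_pos_affine_def using assms by (intro exI[of _ 1]) auto

lemma returns_pos_affine_refl: "returns_pos_affine \<tau> \<mu>0 \<gamma> R R"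
  by (rule returns_pos_affineI_shift[where b = 0]) simp

lemma returns_pos_affine_trans:
  assumes "returns_pos_affine \<tau> \<mu>0 \<gamma> R R'" and "returns_pos_affine \<tau> \<mu>0 \<gamma> R' R''"
  shows "returns_pos_affine \<tau> \<mu>0 \<gamma> R R''"
proof -
  obtain c b where "c > 0" and cb: "\<And>\<xi>. possible_traj \<tau> \<xi> \<and> initial_traj \<mu>0 \<xi> \<Longrightarrow>
      traj_return \<gamma> R' \<xi> = c * traj_return \<gamma> R \<xi> + b"
    using assms(1) unfolding returns_pos_affine_def by blast
  obtain d e where "d > 0" and de: "\<And>\<xi>. possible_traj \<tau> \<xi> \<and> initial_traj \<mu>0 \<xi> \<Longrightarrow>
      traj_return \<gamma> R'' \<xi> = d * traj_return \<gamma> R' \<xi> + e"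
    using assms(2) unfolding returns_pos_affine_def by blast
  have "d * c > 0"
    using \<open>c > 0\<close> \<open>d > 0\<close> by simp
  moreover have "traj_return \<gamma> R'' \<xi> = (d * c) * traj_return \<gamma> R \<xi> + (d * b + e)"
    if "possible_traj \<tau> \<xi> \<and> initial_traj \<mu>0 \<xi>" for \<xi>
    using cb[OF that] de[OF that] by (simp add: algebra_simps)
  ultimately show ?thesis
    unfolding returns_pos_affine_def by blast
qed

lemma returns_pos_affine_order_iff:
  assumes "returns_pos_affine \<tau> \<mu>0 \<gamma> R R'"
    and "possible_traj \<tau> \<xi>1" "initial_traj \<mu>0 \<xi>1" "possible_traj \<tau> \<xi>2" "initial_traj \<mu>0 \<xi>2"
  shows "traj_return \<gamma> R' \<xi>1 \<le> traj_return \<gamma> R' \<xi>2 \<longleftrightarrow>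
         traj_return \<gamma> R \<xi>1 \<le> traj_return \<gamma> R \<xi>2"
proof -
  obtain c b where "c > 0" and cb: "\<And>\<xi>. possible_traj \<tau> \<xi> \<and> initial_traj \<mu>0 \<xi> \<Longrightarrow>
      traj_return \<gamma> R' \<xi> = c * traj_return \<gamma> R \<xi> + b"
    using assms(1) unfolding returns_pos_affine_def by blast
  then show ?thesis
    using assms(2-) by simp
qed

lemma transform_step_returns_pos_affine:
  fixes \<tau> :: "'s::finite \<Rightarrow> 'a::finite \<Rightarrow> 's pmf"
  assumes "\<bar>\<gamma>\<bar> < 1" and "transform_step \<tau> \<mu>0 \<gamma> R R'"
  shows "returns_pos_affine \<tau> \<mu>0 \<gamma> R R'"
  using assms(2) unfolding transform_step_def
proof (elim disjE exE)
  fix k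
  assume "k_initial_shaping \<tau> \<mu>0 \<gamma> k R R'"
  then obtain \<Phi> where init: "\<And>s. initial_state \<mu>0 s \<Longrightarrow> \<Phi> s = k"
    and R': "R' = (\<lambda>s a s'. R s a s' + \<gamma> * \<Phi> s' - \<Phi> s)"
    unfolding k_initial_shaping_def by blast
  show ?thesis
  proof (rule returns_pos_affineI_shift[where b = "- k"])
    fix \<xi> :: "('s, 'a) traj"
    assume "initial_traj \<mu>0 \<xi>"
    then have "\<Phi> (fst \<xi> 0) = k"
      using init by (simp add: initial_state_def initial_traj_def)
    then show "traj_return \<gamma> R' \<xi> = traj_return \<gamma> R \<xi> + - k"
      unfolding R' traj_return_potential_shaped[OF assms(1)] by simp
  qed
next
  assume "positive_scaling R R'"
  then obtain c where "c > 0" and R': "R' = (\<lambda>s a s'. c * R s a s')"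
    unfolding positive_scaling_def by blast
  then show ?thesis
    unfolding returns_pos_affine_def R' traj_return_scaled[OF assms(1)]
    by (intro exI[of _ c] exI[of _ 0]) simp
next
  assume "mask_unreachable \<tau> \<mu>0 R R'"
  then show ?thesis
    by (intro returns_pos_affineI_shift[where b = 0]) (simp add: traj_return_mask_unreachable)
qed

theorem theorem3p14:
  fixes \<tau> :: "'s::finite \<Rightarrow> 'a::finite \<Rightarrow> 's pmf"
    and \<mu>0 :: "'s pmf"
    and \<gamma> :: real
    and R R' :: "('s, 'a) reward"
  assumes "0 < \<gamma>" and "\<gamma> < 1"
    and "(transform_step \<tau> \<mu>0 \<gamma>)\<^sup>*\<^sup>* R R'"
  shows "\<forall>\<xi>1 \<xi>2. possible_traj \<tau> \<xi>1 \<and> initial_traj \<mu>0 \<xi>1 \<and>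
                 possible_traj \<tau> \<xi>2 \<and> initial_traj \<mu>0 \<xi>2 \<longrightarrow>
           (traj_return \<gamma> R' \<xi>1 \<le> traj_return \<gamma> R' \<xi>2 \<longleftrightarrow>
            traj_return \<gamma> R \<xi>1 \<le> traj_return \<gamma> R \<xi>2)"
proof -
  have "\<bar>\<gamma>\<bar> < 1"
    using assms(1,2) by simp
  have "returns_pos_affine \<tau> \<mu>0 \<gamma> R R'"
    using assms(3)
  proof (induction rule: rtranclp_induct)
    case base
    show ?case by (rule returns_pos_affine_refl)
  next
    case (step R'' R''')
    then show ?case
      using returns_pos_affine_trans transform_step_returns_pos_affine[OF \<open>\<bar>\<gamma>\<bar> < 1\<close>] by blast
  qed
  then show ?thesis
    using returns_pos_affine_order_iff by blast
qed

end
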